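(* Let $B_1$ be a Keedwell Sudoku board and let $g\in G_9$. If $B_2=g\cdot B_1$ is also a Keedwell Sudoku board, then $g\in G_k$.
   Context: A Sudoku board is a $9\times 9$ array with entries from $\{0,\dots,8\}$ such that every row, column and each of the nine $3\times 3$ blocks (subsquares) contains each symbol once; the subsquare in block-row $i$ and block-column $j$ ($i,j\in\{0,1,2\}$) is the $(i,j)$th subsquare. The full Sudoku symmetry group is $G_9=H_9\times S_9$, where $H_9$ is the group of cell rearrangements generated by permutations of the three bands (horizontal strips of blocks), permutations of the rows within a band, permutations of the three pillars (vertical strips of blocks), permutations of the columns within a pillar, and the transpose, and $S_9$ is the group of all relabelings (permutations of the symbols applied to every entry). For a $3\times 3$ array, let $\alpha$ be the operation cycling its rows down by one (row $r$ moves to row $r+1 \bmod 3$) and $\beta$ the operation cycling its columns right by one. A Sudoku board $B$ with upper-left subsquare $K$ is Keedwell if there are integers $c_{ij},d_{ij}\in\{0,1,2\}$ ($i,j\in\{0,1,2\}$) with $c_{00}=d_{00}=0$ such that the $(i,j)$th subsquare of $B$ equals $\alpha^{c_{ij}}\beta^{d_{ij}}K$ for all $i,j$. $G_k$ is the set of all $g\in G_9$ that map the set of Keedwell boards to itself (a subgroup of $G_9$). *)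

theory Defs
  imports "HOL-Library.FuncSet" "HOL-Combinatorics.Permutations"
begin

type_synonym cell = "nat \<times> nat"
type_synonym board = "cell \<Rightarrow> nat"

definition grid :: "cell set" where
  "grid = {0..<9} \<times> {0..<9}"

definition sudoku_board :: "board \<Rightarrow> bool" where
  "sudoku_board B \<longleftrightarrow>
     B \<in> extensional grid \<and>
     (\<forall>r<9. bij_betw (\<lambda>c. B (r, c)) {0..<9} {0..<9}) \<and>
     (\<forall>c<9. bij_betw (\<lambda>r. B (r, c)) {0..<9} {0..<9}) \<and>
     (\<forall>i<3. \<forall>j<3. bij_betw (\<lambda>(x, y). B (3*i + x, 3*j + y))
                               ({0..<3} \<times> {0..<3}) {0..<9})"

definition subsquare :: "board \<Rightarrow> nat \<Rightarrow> nat \<Rightarrow> (nat \<Rightarrow> nat \<Rightarrow> nat)" where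
  "subsquare B i j = (\<lambda>r s. B (3*i + r, 3*j + s))"

(* alpha: cycle rows down by one (row r moves to row r+1 mod 3) *)
definition alpha :: "(nat \<Rightarrow> nat \<Rightarrow> nat) \<Rightarrow> (nat \<Rightarrow> nat \<Rightarrow> nat)" where
  "alpha A = (\<lambda>r s. A ((r + 2) mod 3) s)"

(* beta: cycle columns right by one (column s moves to column s+1 mod 3) *)
definition beta :: "(nat \<Rightarrow> nat \<Rightarrow> nat) \<Rightarrow> (nat \<Rightarrow> nat \<Rightarrow> nat)" where
  "beta A = (\<lambda>r s. A r ((s + 2) mod 3))"

definition keedwell :: "board \<Rightarrow> bool" where
  "keedwell B \<longleftrightarrow> sudoku_board B \<and>
     (\<exists>c d :: nat \<Rightarrow> nat \<Rightarrow> nat. c 0 0 = 0 \<and> d 0 0 = 0 \<and>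
        (\<forall>i<3. \<forall>j<3. c i j < 3 \<and> d i j < 3 \<and>
           (\<forall>r<3. \<forall>s<3. subsquare B i j r s =
                ((alpha ^^ c i j) ((beta ^^ d i j) (subsquare B 0 0))) r s)))"

definition band_perm :: "(nat \<Rightarrow> nat) \<Rightarrow> nat \<Rightarrow> nat" where
  "band_perm p r = (if r < 9 then 3 * p (r div 3) + r mod 3 else r)"

definition inband_perm :: "nat \<Rightarrow> (nat \<Rightarrow> nat) \<Rightarrow> nat \<Rightarrow> nat" where
  "inband_perm i p r = (if r div 3 = i \<and> r < 9 then 3 * i + p (r mod 3) else r)"

definition row_map :: "(nat \<Rightarrow> nat) \<Rightarrow> cell \<Rightarrow> cell" where
  "row_map f = (\<lambda>(r, c). (f r, c))"

definition col_map :: "(nat \<Rightarrow> nat) \<Rightarrow> cell \<Rightarrow> cell" where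
  "col_map f = (\<lambda>(r, c). (r, f c))"

definition transp :: "cell \<Rightarrow> cell" where
  "transp = (\<lambda>(r, c). (c, r))"

definition H9_gens :: "(cell \<Rightarrow> cell) set" where
  "H9_gens =
     {row_map (band_perm p) | p. p permutes {0..<3}} \<union>
     {row_map (inband_perm i p) | i p. i < 3 \<and> p permutes {0..<3}} \<union>
     {col_map (band_perm p) | p. p permutes {0..<3}} \<union>
     {col_map (inband_perm i p) | i p. i < 3 \<and> p permutes {0..<3}} \<union>
     {transp}"

(* H_9: the group generated by the generators (finite, so closure under
   composition with the identity suffices). *)
inductive_set H9 :: "(cell \<Rightarrow> cell) set" where
  H9_id: "id \<in> H9"
| H9_step: "g \<in> H9_gens \<Longrightarrow> h \<in> H9 \<Longrightarrow> g \<circ> h \<in> H9"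

definition G9 :: "((cell \<Rightarrow> cell) \<times> (nat \<Rightarrow> nat)) set" where
  "G9 = H9 \<times> {\<pi>. \<pi> permutes {0..<9}}"

(* Action: cell x's content moves to cell \<sigma> x, and symbols are relabelled by \<pi>. *)
definition act :: "((cell \<Rightarrow> cell) \<times> (nat \<Rightarrow> nat)) \<Rightarrow> board \<Rightarrow> board" where
  "act g B = (\<lambda>x. if x \<in> grid then snd g (B (inv_into grid (fst g) x)) else undefined)"

definition Gk :: "((cell \<Rightarrow> cell) \<times> (nat \<Rightarrow> nat)) set" where
  "Gk = {g \<in> G9. act g ` {B. keedwell B} = {B. keedwell B}}"

end

theory Submission
  imports Defs
begin

text \<open>Every cell rearrangement in \<open>H\<^sub>9\<close> is, up to a transposition, a product of a row map and
  a column map, each of which permutes the three bands and moves the lines inside band \<open>i\<close> by an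
  affine bijection \<open>x \<mapsto> e\<^sub>i x + k\<^sub>i\<close> of \<open>\<int>/3\<close>. Keedwell boards are the Sudoku boards whose blocks are
  cyclic translates of the upper-left block. If both \<open>B\<^sub>1\<close> and \<open>g B\<^sub>1\<close> are Keedwell, then every block
  of \<open>B\<^sub>1\<close>, read through \<open>g\<close>, is an affine image of the upper-left block of \<open>g B\<^sub>1\<close> with slopes
  \<open>e\<^sub>i, f\<^sub>j\<close>; since that block is injective, all slopes \<open>e\<^sub>i\<close> agree and so do all \<open>f\<^sub>j\<close>. With
  constant slopes, conjugating translations by the affine maps yields translations again, so \<open>g\<close>
  maps Keedwell boards to Keedwell boards. As \<open>g\<close> acts injectively and there are finitely many
  Keedwell boards, \<open>g\<close> permutes them.\<close>

lemma bij_betw_endo: "finite A \<Longrightarrow> f ` A \<subseteq> A \<Longrightarrow> inj_on f A \<Longrightarrow> bij_betw f A A"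
  by (simp add: bij_betw_def endo_inj_surj)

lemma bij_betw_transport:
  assumes h: "bij_betw h A A" and g: "bij_betw g A C" and \<pi>: "bij_betw \<pi> C C"
    and eq: "\<And>a. a \<in> A \<Longrightarrow> f (h a) = \<pi> (g a)"
  shows "bij_betw f A C"
proof -
  have "bij_betw (f \<circ> h) A C = bij_betw (\<pi> \<circ> g) A C"
    by (rule bij_betw_cong) (simp add: eq)
  then have "bij_betw (f \<circ> h) A C"
    using bij_betw_trans[OF g \<pi>] by simp
  then show ?thesis
    by (rule bij_betw_comp_iff[OF h, THEN iffD2])
qed

lemma bij_betw_obtain:
  assumes "bij_betw f A B" "b \<in> B"
  obtains a where "a \<in> A" "b = f a"
  using assms by (auto simp: bij_betw_def)

section \<open>Affine bijections of \<open>\<int>/3\<close>\<close>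

text \<open>\<open>aff3 e k\<close> is \<open>x \<mapsto> e x + k\<close> on \<open>\<int>/3 = {0, 1, 2}\<close>; slopes are normalised to the units
  \<open>e \<in> {1, 2}\<close>, which satisfy \<open>e * e \<equiv> 1\<close>.\<close>

definition aff3 :: "nat \<Rightarrow> nat \<Rightarrow> nat \<Rightarrow> nat" where
  "aff3 e k x = (e * x + k) mod 3"

lemma aff3_less [simp]: "aff3 e k x < 3"
  by (simp add: aff3_def)

lemma aff3_comp: "aff3 a b (aff3 c d x) = aff3 (a * c) (a * d + b) x"
proof -
  have "(a * ((c * x + d) mod 3) + b) mod 3 = (a * (c * x + d) + b) mod 3"
    by (metis mod_add_left_eq mod_mult_right_eq)
  then show ?thesis
    unfolding aff3_def by (simp add: algebra_simps)
qed

lemma aff3_mod_slope: "aff3 (a mod 3) b x = aff3 a b x"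
  unfolding aff3_def by (metis mod_add_left_eq mod_mult_left_eq)

lemma aff3_mod_shift: "aff3 a (b mod 3) x = aff3 a b x"
  unfolding aff3_def by (metis mod_add_right_eq)

lemma slope3_mult: "a \<in> {1, 2} \<Longrightarrow> b \<in> {1, 2} \<Longrightarrow> (a * b) mod 3 \<in> {1, 2 :: nat}"
  by auto

lemma less3_cases: "(x::nat) < 3 \<Longrightarrow> x = 0 \<or> x = 1 \<or> x = 2"
  by auto

lemma aff3_inj:
  assumes "e \<in> {1, 2}" "x < 3" "x' < 3" "aff3 e k x = aff3 e k x'"
  shows "x = x'"
proof -
  obtain r where "r < 3" "aff3 e r x = aff3 e r x'"
    using assms(4) by (metis aff3_mod_shift mod_less_divisor zero_less_numeral)
  then show ?thesis
    using assms(1-3) by (auto dest!: less3_cases simp: aff3_def)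
qed

lemma aff3_slope_eq:
  assumes "a \<in> {1, 2}" "b \<in> {1, 2}"
    and "aff3 a u 0 = aff3 b v 0" "aff3 a u 1 = aff3 b v 1"
  shows "a = b"
proof -
  have "u mod 3 = v mod 3" "(a + u) mod 3 = (b + v) mod 3"
    using assms(3,4) unfolding aff3_def by simp_all
  then obtain r where "r < 3" "(a + r) mod 3 = (b + r) mod 3"
    by (metis mod_add_right_eq mod_less_divisor zero_less_numeral)
  then show ?thesis
    using assms(1,2) by (auto dest!: less3_cases)
qed

lemma aff3_translate:
  assumes "a \<in> {1, 2}"
  shows "aff3 a u x = aff3 a u0 (aff3 1 (a * (u + 2 * u0)) x)"
proof -
  have "(a * (a * (u + 2 * u0)) + u0) mod 3 = u mod 3"
    using assms by auto presburger+
  then show ?thesis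
    by (metis aff3_comp aff3_mod_shift mult_1_right)
qed

lemma aff3_translate_back: "x < 3 \<Longrightarrow> aff3 1 a (aff3 1 (2 * a) x) = x"
proof -
  assume "x < 3"
  have "aff3 1 a (aff3 1 (2 * a) x) = aff3 1 (3 * a) x"
    by (simp add: aff3_comp)
  also have "\<dots> = aff3 1 ((3 * a) mod 3) x"
    by (simp only: aff3_mod_shift)
  also have "\<dots> = x"
    using \<open>x < 3\<close> by (simp add: aff3_def)
  finally show ?thesis .
qed

lemma aff3_double_double: "aff3 1 (2 * ((2 * a) mod 3)) x = aff3 1 a x"
proof -
  have "(2 * ((2 * a) mod 3)) mod 3 = (a + 3 * a) mod 3"
    by (simp add: mod_mult_right_eq)
  then show ?thesis
    by (metis aff3_mod_shift mod_mult_self2)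
qed

lemma three_distinct_affine:
  assumes "u < 3" "v < 3" "w < 3" "u \<noteq> v" "u \<noteq> w" "v \<noteq> w"
  shows "(aff3 1 u 1 = v \<and> aff3 1 u 2 = w) \<or> (aff3 2 u 1 = v \<and> aff3 2 u 2 = w)"
  using assms by (elim less3_cases[THEN disjE] disjE) (simp_all add: aff3_def)

lemma less3_induct: "P 0 \<Longrightarrow> P 1 \<Longrightarrow> P 2 \<Longrightarrow> (x::nat) < 3 \<Longrightarrow> P x"
  by (auto dest!: less3_cases)

lemma permutes3_affine:
  assumes "p permutes {0..<3}"
  obtains a b where "a \<in> {1, 2}" "\<And>x. x < 3 \<Longrightarrow> p x = aff3 a b x"
proof -
  have lt: "p 0 < 3" "p 1 < 3" "p 2 < 3"
    using permutes_in_image[OF assms] by simp_all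
  have "inj p"
    using permutes_inj[OF assms] .
  then have ne: "p 0 \<noteq> p 1" "p 0 \<noteq> p 2" "p 1 \<noteq> p 2"
    by (simp_all add: inj_eq)
  have p0: "aff3 a (p 0) 0 = p 0" for a
    using lt by (simp add: aff3_def)
  from three_distinct_affine[OF lt ne] show ?thesis
  proof (elim disjE conjE)
    assume "aff3 1 (p 0) 1 = p 1" "aff3 1 (p 0) 2 = p 2"
    then show ?thesis
      using p0 by (intro that[of 1 "p 0"]) (auto intro: less3_induct)
  next
    assume "aff3 2 (p 0) 1 = p 1" "aff3 2 (p 0) 2 = p 2"
    then show ?thesis
      using p0 by (intro that[of 2 "p 0"]) (auto intro: less3_induct)
  qed
qed

lemma aff3_inverse:
  assumes "e \<in> {1, 2}" "x < 3"
  shows "aff3 e k (aff3 e (2 * e * k) x) = x"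
proof -
  have "aff3 e k (aff3 e (2 * e * k) x) = aff3 ((e * e) mod 3) ((e * (2 * e * k) + k) mod 3) x"
    by (simp add: aff3_comp aff3_mod_slope aff3_mod_shift)
  also have "\<dots> = aff3 1 0 x"
  proof -
    have "3 dvd 2 * e * e + 1" and e2: "(e * e) mod 3 = 1"
      using assms(1) by auto
    from this(1) have "3 dvd (2 * e * e + 1) * k"
      by (rule dvd_mult2)
    moreover have "e * (2 * e * k) + k = (2 * e * e + 1) * k"
      by (simp add: algebra_simps)
    ultimately have "(e * (2 * e * k) + k) mod 3 = 0"
      by (simp only: dvd_eq_mod_eq_0)
    then show ?thesis
      by (simp only: e2)
  qed
  also have "\<dots> = x"
    using assms(2) by (simp add: aff3_def)
  finally show ?thesis .
qed

lemma aff3_bij: "e \<in> {1, 2} \<Longrightarrow> bij_betw (aff3 e k) {0..<3} {0..<3}"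
  by (intro bij_betw_endo inj_onI) (auto intro: aff3_inj)

section \<open>A normal form for the cell rearrangements in \<open>H\<^sub>9\<close>\<close>

definition valid_lines :: "(nat \<Rightarrow> nat) \<Rightarrow> (nat \<Rightarrow> nat) \<Rightarrow> bool" where
  "valid_lines P e \<longleftrightarrow> P permutes {0..<3} \<and> (\<forall>i<3. e i \<in> {1, 2})"

definition line_map :: "(nat \<Rightarrow> nat) \<Rightarrow> (nat \<Rightarrow> nat) \<Rightarrow> (nat \<Rightarrow> nat) \<Rightarrow> nat \<Rightarrow> nat" where
  "line_map P e k r = 3 * P (r div 3) + aff3 (e (r div 3)) (k (r div 3)) (r mod 3)"

lemma line_map_block [simp]: "x < 3 \<Longrightarrow> line_map P e k (3 * i + x) = 3 * P i + aff3 (e i) (k i) x"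
  by (simp add: line_map_def)

lemma valid_lines_less: "valid_lines P e \<Longrightarrow> i < 3 \<Longrightarrow> P i < 3"
  unfolding valid_lines_def using permutes_in_image[of P "{0..<3}" i] by simp

lemma line_map_less: "valid_lines P e \<Longrightarrow> r < 9 \<Longrightarrow> line_map P e k r < 9"
  using valid_lines_less[of P e "r div 3"] aff3_less[of "e (r div 3)" "k (r div 3)" "r mod 3"]
  unfolding line_map_def by linarith

lemma line_map_div: "line_map P e k r div 3 = P (r div 3)"
  by (simp add: line_map_def)

lemma line_map_mod: "line_map P e k r mod 3 = aff3 (e (r div 3)) (k (r div 3)) (r mod 3)"
  by (simp add: line_map_def)

lemma line_map_inj: "valid_lines P e \<Longrightarrow> inj_on (line_map P e k) {0..<9}"
proof (rule inj_onI)
  fix r r' assume v: "valid_lines P e" and "r \<in> {0..<9}"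
    and eq: "line_map P e k r = line_map P e k r'"
  from v have "P permutes {0..<3}" and e: "e (r div 3) \<in> {1, 2}"
    using \<open>r \<in> {0..<9}\<close> by (simp_all add: valid_lines_def)
  have "line_map P e k r div 3 = line_map P e k r' div 3"
    using eq by (rule arg_cong)
  then have "P (r div 3) = P (r' div 3)"
    by (simp only: line_map_div)
  then have i: "r div 3 = r' div 3"
    using permutes_inj[OF \<open>P permutes {0..<3}\<close>] by (simp add: inj_eq)
  have "line_map P e k r mod 3 = line_map P e k r' mod 3"
    using eq by (rule arg_cong)
  then have "aff3 (e (r div 3)) (k (r div 3)) (r mod 3) = aff3 (e (r div 3)) (k (r div 3)) (r' mod 3)"
    by (simp only: line_map_mod i)
  then have "r mod 3 = r' mod 3"
    using aff3_inj[OF e] by simp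
  with i show "r = r'"
    using div_mult_mod_eq[of r 3] div_mult_mod_eq[of r' 3] by linarith
qed

lemma line_map_bij: "valid_lines P e \<Longrightarrow> bij_betw (line_map P e k) {0..<9} {0..<9}"
  by (intro bij_betw_endo line_map_inj) (auto intro: line_map_less)

definition line_generator :: "(nat \<Rightarrow> nat) \<Rightarrow> bool" where
  "line_generator \<phi> \<longleftrightarrow> (\<exists>p. p permutes {0..<3} \<and> \<phi> = band_perm p) \<or>
     (\<exists>i p. i < 3 \<and> p permutes {0..<3} \<and> \<phi> = inband_perm i p)"

lemma line_generator_comp_line_map:
  assumes v: "valid_lines P e" and "line_generator \<phi>"
  obtains P' e' k' where "valid_lines P' e'" "\<And>r. r < 9 \<Longrightarrow> \<phi> (line_map P e k r) = line_map P' e' k' r"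
  using \<open>line_generator \<phi>\<close> unfolding line_generator_def
proof (elim disjE exE conjE)
  fix p assume p: "p permutes {0..<3}" and \<phi>: "\<phi> = band_perm p"
  show thesis
  proof (rule that)
    show "valid_lines (p \<circ> P) e"
      using v p by (simp add: valid_lines_def permutes_compose)
    fix r :: nat assume "r < 9"
    then show "\<phi> (line_map P e k r) = line_map (p \<circ> P) e k r"
      using line_map_less[OF v \<open>r < 9\<close>, of k] unfolding \<phi> band_perm_def
      by (simp add: line_map_def)
  qed
next
  fix i0 p assume i0: "i0 < 3" and p: "p permutes {0..<3}" and \<phi>: "\<phi> = inband_perm i0 p"
  obtain a b where a: "a \<in> {1, 2}" and pa: "\<And>x. x < 3 \<Longrightarrow> p x = aff3 a b x"
    using permutes3_affine[OF p] by blast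
  define e' where "e' i = (if P i = i0 then (a * e i) mod 3 else e i)" for i
  define k' where "k' i = (if P i = i0 then a * k i + b else k i)" for i
  show thesis
  proof (rule that)
    show "valid_lines P e'"
      using v a unfolding valid_lines_def e'_def by (auto intro: slope3_mult)
    fix r :: nat assume "r < 9"
    then show "\<phi> (line_map P e k r) = line_map P e' k' r"
      using line_map_less[OF v \<open>r < 9\<close>, of k]
      unfolding \<phi> inband_perm_def line_map_def e'_def k'_def
      by (simp add: pa aff3_comp aff3_mod_slope)
  qed
qed

definition swap_if :: "bool \<Rightarrow> cell \<Rightarrow> cell" where
  "swap_if t z = (if t then prod.swap z else z)"

definition normal_form :: "(cell \<Rightarrow> cell) \<Rightarrow> bool \<Rightarrow> (nat \<Rightarrow> nat) \<Rightarrow> (nat \<Rightarrow> nat) \<Rightarrow> (nat \<Rightarrow> nat)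
    \<Rightarrow> (nat \<Rightarrow> nat) \<Rightarrow> (nat \<Rightarrow> nat) \<Rightarrow> (nat \<Rightarrow> nat) \<Rightarrow> bool" where
  "normal_form \<sigma> t P e k Q f l \<longleftrightarrow> valid_lines P e \<and> valid_lines Q f \<and>
     (\<forall>r<9. \<forall>c<9. \<sigma> (r, c) = swap_if t (line_map P e k r, line_map Q f l c))"

abbreviation has_normal_form :: "(cell \<Rightarrow> cell) \<Rightarrow> bool" where
  "has_normal_form \<sigma> \<equiv> \<exists>t P e k Q f l. normal_form \<sigma> t P e k Q f l"

lemma swap_if_True [simp]: "swap_if True = prod.swap"
  and swap_if_False [simp]: "swap_if False = id"
  by (simp_all add: fun_eq_iff swap_if_def)

lemma normal_form_transp: "normal_form \<sigma> t P e k Q f l \<Longrightarrow> normal_form (transp \<circ> \<sigma>) (\<not> t) P e k Q f l"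
  unfolding normal_form_def by (simp add: swap_if_def transp_def)

lemma has_normal_form_row_map:
  assumes \<sigma>: "normal_form \<sigma> t P e k Q f l" and \<phi>: "line_generator \<phi>"
  shows "has_normal_form (row_map \<phi> \<circ> \<sigma>)"
proof (cases t)
  case True
  from \<sigma> have "valid_lines Q f" by (simp add: normal_form_def)
  then obtain Q' f' l' where "valid_lines Q' f'"
    and "\<And>c. c < 9 \<Longrightarrow> \<phi> (line_map Q f l c) = line_map Q' f' l' c"
    using \<phi> by (rule line_generator_comp_line_map[where k = l]) auto
  then have "normal_form (row_map \<phi> \<circ> \<sigma>) t P e k Q' f' l'"
    using \<sigma> True unfolding normal_form_def by (simp add: swap_if_def row_map_def)
  then show ?thesis by blast
next
  case False
  from \<sigma> have "valid_lines P e" by (simp add: normal_form_def)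
  then obtain P' e' k' where "valid_lines P' e'"
    and "\<And>r. r < 9 \<Longrightarrow> \<phi> (line_map P e k r) = line_map P' e' k' r"
    using \<phi> by (rule line_generator_comp_line_map[where k = k]) auto
  then have "normal_form (row_map \<phi> \<circ> \<sigma>) t P' e' k' Q f l"
    using \<sigma> False unfolding normal_form_def by (simp add: swap_if_def row_map_def)
  then show ?thesis by blast
qed

lemma col_map_conv_row_map: "col_map \<phi> = transp \<circ> row_map \<phi> \<circ> transp"
  by (simp add: fun_eq_iff col_map_def row_map_def transp_def)

lemma has_normal_form_col_map:
  assumes \<sigma>: "normal_form \<sigma> t P e k Q f l" and \<phi>: "line_generator \<phi>"
  shows "has_normal_form (col_map \<phi> \<circ> \<sigma>)"
proof -
  obtain t' P' e' k' Q' f' l' where "normal_form (row_map \<phi> \<circ> (transp \<circ> \<sigma>)) t' P' e' k' Q' f' l'"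
    using has_normal_form_row_map[OF normal_form_transp[OF \<sigma>] \<phi>] by blast
  then have "normal_form (col_map \<phi> \<circ> \<sigma>) (\<not> t') P' e' k' Q' f' l'"
    using normal_form_transp by (simp add: col_map_conv_row_map comp_assoc)
  then show ?thesis
    by blast
qed

lemma H9_gens_cases:
  assumes "g \<in> H9_gens"
  obtains "g = transp" | \<phi> where "line_generator \<phi>" "g = row_map \<phi>"
    | \<phi> where "line_generator \<phi>" "g = col_map \<phi>"
  using assms unfolding H9_gens_def line_generator_def by blast

lemma H9_normal_form: "\<sigma> \<in> H9 \<Longrightarrow> has_normal_form \<sigma>"
proof (induction rule: H9.induct)
  case H9_id
  have "normal_form id False id (\<lambda>_. 1) (\<lambda>_. 0) id (\<lambda>_. 1) (\<lambda>_. 0)"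
    unfolding normal_form_def valid_lines_def line_map_def aff3_def swap_if_def
    by (simp add: permutes_id)
  then show ?case by blast
next
  case (H9_step g h)
  then obtain t P e k Q f l where h: "normal_form h t P e k Q f l" by blast
  from H9_step.hyps(1) show ?case
  proof (cases rule: H9_gens_cases)
    case 1
    then show ?thesis using normal_form_transp[OF h] by blast
  next
    case (2 \<phi>)
    then show ?thesis using has_normal_form_row_map[OF h] by blast
  next
    case (3 \<phi>)
    then show ?thesis using has_normal_form_col_map[OF h] by blast
  qed
qed

lemma swap_if_swap_if [simp]: "swap_if t (swap_if t z) = z"
  by (simp add: swap_if_def)

lemma swap_if_grid [simp]: "swap_if t z \<in> grid \<longleftrightarrow> z \<in> grid"
  by (cases z) (auto simp: swap_if_def grid_def)

lemma bij_betw_swap_if_grid: "bij_betw (swap_if t) grid grid"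
  by (rule bij_betw_byWitness[where f' = "swap_if t"]) auto

lemma normal_form_bij:
  assumes "normal_form \<sigma> t P e k Q f l"
  shows "bij_betw \<sigma> grid grid"
proof -
  have "bij_betw (map_prod (line_map P e k) (line_map Q f l)) grid grid"
    using assms unfolding normal_form_def grid_def by (intro bij_betw_map_prod line_map_bij) simp_all
  then have "bij_betw (swap_if t \<circ> map_prod (line_map P e k) (line_map Q f l)) grid grid"
    using bij_betw_swap_if_grid by (rule bij_betw_trans)
  moreover have "bij_betw \<sigma> grid grid =
      bij_betw (swap_if t \<circ> map_prod (line_map P e k) (line_map Q f l)) grid grid"
    by (rule bij_betw_cong) (use assms in \<open>auto simp: normal_form_def grid_def\<close>)
  ultimately show ?thesis
    by simp
qed

lemma act_apply:
  assumes "bij_betw \<sigma> grid grid" "z \<in> grid"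
  shows "act (\<sigma>, \<pi>) B (\<sigma> z) = \<pi> (B z)"
  using assms bij_betw_apply[OF assms] inv_into_f_f[OF bij_betw_imp_inj_on[OF assms(1)]]
  by (simp add: act_def)

lemma act_normal_form:
  assumes "normal_form \<sigma> t P e k Q f l" "r < 9" "c < 9"
  shows "act (\<sigma>, \<pi>) B (swap_if t (line_map P e k r, line_map Q f l c)) = \<pi> (B (r, c))"
  using act_apply[OF normal_form_bij[OF assms(1)], of "(r, c)"] assms
  by (simp add: normal_form_def grid_def)

lemma act_inj_on:
  assumes "bij_betw \<sigma> grid grid" "inj \<pi>"
  shows "inj_on (act (\<sigma>, \<pi>)) (extensional grid)"
proof (rule inj_onI)
  fix B B' assume B: "B \<in> extensional grid" "B' \<in> extensional grid"
    and eq: "act (\<sigma>, \<pi>) B = act (\<sigma>, \<pi>) B'"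
  show "B = B'"
  proof (rule extensionalityI[OF B])
    fix z assume "z \<in> grid"
    have "\<pi> (B z) = \<pi> (B' z)"
      using act_apply[OF assms(1) \<open>z \<in> grid\<close>, of \<pi> B] act_apply[OF assms(1) \<open>z \<in> grid\<close>, of \<pi> B'] eq
      by simp
    then show "B z = B' z"
      using \<open>inj \<pi>\<close> by (simp add: inj_eq)
  qed
qed

section \<open>Sudoku and Keedwell boards\<close>

lemma sudoku_boardI:
  assumes "B \<in> extensional grid"
    and "\<And>r. r < 9 \<Longrightarrow> bij_betw (\<lambda>c. B (r, c)) {0..<9} {0..<9}"
    and "\<And>c. c < 9 \<Longrightarrow> bij_betw (\<lambda>r. B (r, c)) {0..<9} {0..<9}"
    and "\<And>i j. i < 3 \<Longrightarrow> j < 3 \<Longrightarrow>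
      bij_betw (\<lambda>(x, y). B (3 * i + x, 3 * j + y)) ({0..<3} \<times> {0..<3}) {0..<9}"
  shows "sudoku_board B"
  using assms by (simp add: sudoku_board_def)

lemma
  assumes "sudoku_board B"
  shows sudoku_board_extensional: "B \<in> extensional grid"
    and sudoku_board_row: "r < 9 \<Longrightarrow> bij_betw (\<lambda>c. B (r, c)) {0..<9} {0..<9}"
    and sudoku_board_col: "c < 9 \<Longrightarrow> bij_betw (\<lambda>r. B (r, c)) {0..<9} {0..<9}"
    and sudoku_board_block: "i < 3 \<Longrightarrow> j < 3 \<Longrightarrow>
      bij_betw (\<lambda>(x, y). B (3 * i + x, 3 * j + y)) ({0..<3} \<times> {0..<3}) {0..<9}"
  using assms by (simp_all add: sudoku_board_def)

lemma sudoku_board_values: "sudoku_board B \<Longrightarrow> r < 9 \<Longrightarrow> c < 9 \<Longrightarrow> B (r, c) < 9"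
  using bij_betwE[OF sudoku_board_row] by simp

lemma finite_sudoku_boards: "finite {B. sudoku_board B}"
proof (rule finite_subset)
  show "{B. sudoku_board B} \<subseteq> (\<Pi>\<^sub>E z\<in>grid. {0..<9})"
  proof (intro subsetI CollectI PiE_I)
    fix B z assume "B \<in> {B. sudoku_board B}" and "z \<in> grid"
    then show "B z \<in> {0..<9}"
      using sudoku_board_values by (cases z) (simp add: grid_def)
  next
    fix B z assume "B \<in> {B. sudoku_board B}" and "z \<notin> grid"
    then show "B z = undefined"
      by (simp add: extensional_arb[OF sudoku_board_extensional])
  qed
  show "finite (\<Pi>\<^sub>E z\<in>grid. {0..<9::nat})"
    by (simp add: finite_PiE grid_def)
qed

lemma sudoku_board_swap:
  assumes "sudoku_board B"
  shows "sudoku_board (B \<circ> prod.swap)"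
proof (rule sudoku_boardI)
  have swap: "bij_betw prod.swap ({0..<3} \<times> {0..<3}) ({0..<3::nat} \<times> {0..<3::nat})"
    by (rule bij_betw_byWitness[where f' = prod.swap]) auto
  show "bij_betw (\<lambda>(x, y). (B \<circ> prod.swap) (3 * i + x, 3 * j + y)) ({0..<3} \<times> {0..<3}) {0..<9}"
    if "i < 3" "j < 3" for i j
    by (rule bij_betw_transport[OF swap sudoku_board_block[OF assms \<open>j < 3\<close> \<open>i < 3\<close>] bij_betw_id])
      auto
  show "B \<circ> prod.swap \<in> extensional grid"
    using extensional_arb[OF sudoku_board_extensional[OF assms]]
    by (auto simp: extensional_def grid_def)
qed (use sudoku_board_row sudoku_board_col assms in simp_all)

lemma sudoku_board_corner_inj:
  assumes "sudoku_board B" "x < 3" "y < 3" "x' < 3" "y' < 3" "B (x, y) = B (x', y')"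
  shows "x = x' \<and> y = y'"
proof -
  have "inj_on (\<lambda>(x, y). B (3 * 0 + x, 3 * 0 + y)) ({0..<3} \<times> {0..<3})"
    using sudoku_board_block[OF assms(1), of 0 0] by (simp add: bij_betw_def)
  then show ?thesis
    using assms(2-6) by (auto dest: inj_onD)
qed

lemma alpha_pow: "r < 3 \<Longrightarrow> (alpha ^^ n) A r s = A ((r + 2 * n) mod 3) s"
proof (induction n arbitrary: r)
  case (Suc n)
  have "(alpha ^^ Suc n) A r s = (alpha ^^ n) A ((r + 2) mod 3) s"
    by (simp add: alpha_def)
  also have "\<dots> = A (((r + 2) mod 3 + 2 * n) mod 3) s"
    using Suc.IH by simp
  also have "((r + 2) mod 3 + 2 * n) mod 3 = (r + 2 * Suc n) mod 3"
    by (simp add: mod_add_left_eq)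
  finally show ?case .
qed simp

lemma beta_pow: "s < 3 \<Longrightarrow> (beta ^^ n) A r s = A r ((s + 2 * n) mod 3)"
proof (induction n arbitrary: s)
  case (Suc n)
  have "(beta ^^ Suc n) A r s = (beta ^^ n) A r ((s + 2) mod 3)"
    by (simp add: beta_def)
  also have "\<dots> = A r (((s + 2) mod 3 + 2 * n) mod 3)"
    using Suc.IH by simp
  also have "((s + 2) mod 3 + 2 * n) mod 3 = (s + 2 * Suc n) mod 3"
    by (simp add: mod_add_left_eq)
  finally show ?case .
qed simp

lemma alpha_beta_pow:
  "r < 3 \<Longrightarrow> s < 3 \<Longrightarrow>
    (alpha ^^ c) ((beta ^^ d) (\<lambda>r s. B (r, s))) r s = B (aff3 1 (2 * c) r, aff3 1 (2 * d) s)"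
  by (simp add: alpha_pow beta_pow aff3_def add.commute)

text \<open>\<open>\<alpha>\<^sup>c \<beta>\<^sup>d\<close> translates a block by \<open>(2 c, 2 d)\<close> modulo 3, so the Keedwell condition says
  that every block is a translate of the upper-left one; the normalisation \<open>c\<^sub>0\<^sub>0 = d\<^sub>0\<^sub>0 = 0\<close> is
  immaterial.\<close>

lemma keedwell_iff_translates:
  "keedwell B \<longleftrightarrow> sudoku_board B \<and> (\<forall>i<3. \<forall>j<3. \<exists>a b. \<forall>x<3. \<forall>y<3.
     B (3 * i + x, 3 * j + y) = B (aff3 1 a x, aff3 1 b y))"
  (is "_ \<longleftrightarrow> _ \<and> ?translates")
proof
  assume "keedwell B"
  then obtain c d where "sudoku_board B" and cd: "\<forall>i<3. \<forall>j<3. c i j < 3 \<and> d i j < 3 \<and>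
      (\<forall>r<3. \<forall>s<3. subsquare B i j r s = ((alpha ^^ c i j) ((beta ^^ d i j) (subsquare B 0 0))) r s)"
    unfolding keedwell_def by blast
  have ?translates
  proof (intro allI impI)
    fix i j :: nat assume "i < 3" "j < 3"
    then show "\<exists>a b. \<forall>x<3. \<forall>y<3. B (3 * i + x, 3 * j + y) = B (aff3 1 a x, aff3 1 b y)"
      using cd by (auto simp: alpha_beta_pow subsquare_def)
  qed
  with \<open>sudoku_board B\<close> show "sudoku_board B \<and> ?translates" ..
next
  assume "sudoku_board B \<and> ?translates"
  then obtain a b where "sudoku_board B" and ab: "\<forall>i<3. \<forall>j<3. \<forall>x<3. \<forall>y<3.
      B (3 * i + x, 3 * j + y) = B (aff3 1 (a i j) x, aff3 1 (b i j) y)"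
    by metis
  define c where "c i j = (if i = 0 \<and> j = 0 then 0 else (2 * a i j) mod 3)" for i j
  define d where "d i j = (if i = 0 \<and> j = 0 then 0 else (2 * b i j) mod 3)" for i j
  have cd_less: "c i j < 3" "d i j < 3" for i j
    by (simp_all add: c_def d_def)
  have shifts: "subsquare B i j r s = ((alpha ^^ c i j) ((beta ^^ d i j) (subsquare B 0 0))) r s"
    if "i < 3" "j < 3" "r < 3" "s < 3" for i j r s
  proof (cases "i = 0 \<and> j = 0")
    case True
    then show ?thesis
      using that by (simp add: subsquare_def c_def d_def alpha_beta_pow aff3_def)
  next
    case False
    have "subsquare B i j r s = B (aff3 1 (a i j) r, aff3 1 (b i j) s)"
      using ab that by (simp add: subsquare_def)
    also have "\<dots> = B (aff3 1 (2 * c i j) r, aff3 1 (2 * d i j) s)"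
      using False by (simp only: c_def d_def if_False aff3_double_double)
    also have "\<dots> = ((alpha ^^ c i j) ((beta ^^ d i j) (subsquare B 0 0))) r s"
      using that by (simp add: subsquare_def alpha_beta_pow)
    finally show ?thesis .
  qed
  show "keedwell B"
    unfolding keedwell_def
    by (intro conjI \<open>sudoku_board B\<close> exI[of _ c] exI[of _ d] allI impI cd_less shifts)
      (simp_all add: c_def d_def)
qed

lemma keedwell_sudoku_board: "keedwell B \<Longrightarrow> sudoku_board B"
  by (simp add: keedwell_def)

lemma keedwell_block_translate:
  assumes "keedwell B" "i < 3" "j < 3"
  obtains a b where "\<And>x y. x < 3 \<Longrightarrow> y < 3 \<Longrightarrow> B (3 * i + x, 3 * j + y) = B (aff3 1 a x, aff3 1 b y)"
proof -
  have "\<forall>i<3. \<forall>j<3. \<exists>a b. \<forall>x<3. \<forall>y<3. B (3 * i + x, 3 * j + y) = B (aff3 1 a x, aff3 1 b y)"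
    using assms(1) by (simp add: keedwell_iff_translates)
  from this[rule_format, OF assms(2,3)] obtain a b
    where "\<forall>x<3. \<forall>y<3. B (3 * i + x, 3 * j + y) = B (aff3 1 a x, aff3 1 b y)"
    by blast
  then show ?thesis
    by (intro that) simp
qed

lemma keedwell_swap:
  assumes "keedwell B"
  shows "keedwell (B \<circ> prod.swap)"
proof -
  have "\<exists>a b. \<forall>x<3. \<forall>y<3. B (3 * j + y, 3 * i + x) = B (aff3 1 b y, aff3 1 a x)"
    if "i < 3" "j < 3" for i j
  proof -
    obtain a b where "\<And>x y. x < 3 \<Longrightarrow> y < 3 \<Longrightarrow> B (3 * j + x, 3 * i + y) = B (aff3 1 a x, aff3 1 b y)"
      by (rule keedwell_block_translate[OF assms \<open>j < 3\<close> \<open>i < 3\<close>]) auto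
    then show ?thesis
      by (intro exI[of _ b] exI[of _ a]) simp
  qed
  then show ?thesis
    using sudoku_board_swap[OF keedwell_sudoku_board[OF assms]] by (simp add: keedwell_iff_translates)
qed

lemma keedwell_swap_if_iff: "keedwell (B \<circ> swap_if t) \<longleftrightarrow> keedwell B"
proof (cases t)
  case True
  then show ?thesis
    using keedwell_swap[of B] keedwell_swap[of "B \<circ> prod.swap"] by (auto simp: comp_assoc)
qed simp

lemma keedwell_of_affine_blocks:
  assumes B: "sudoku_board B" and a: "a \<in> {1, 2}" and b: "b \<in> {1, 2}"
    and blocks: "\<And>I J. I < 3 \<Longrightarrow> J < 3 \<Longrightarrow> \<exists>u v. \<forall>X<3. \<forall>Y<3.
      B (3 * I + X, 3 * J + Y) = L (aff3 a u X) (aff3 b v Y)"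
  shows "keedwell B"
  unfolding keedwell_iff_translates
proof (intro conjI B allI impI)
  obtain u0 v0 where uv0: "\<forall>X<3. \<forall>Y<3. B (X, Y) = L (aff3 a u0 X) (aff3 b v0 Y)"
    using blocks[of 0 0] by auto
  fix I J :: nat assume IJ: "I < 3" "J < 3"
  from blocks[OF IJ] obtain u v where uv: "\<forall>X<3. \<forall>Y<3. B (3 * I + X, 3 * J + Y) = L (aff3 a u X) (aff3 b v Y)"
    by blast
  have "B (3 * I + X, 3 * J + Y) = B (aff3 1 (a * (u + 2 * u0)) X, aff3 1 (b * (v + 2 * v0)) Y)"
    if "X < 3" "Y < 3" for X Y
  proof -
    have "B (3 * I + X, 3 * J + Y) = L (aff3 a u X) (aff3 b v Y)"
      using uv that by simp
    also have "\<dots> = L (aff3 a u0 (aff3 1 (a * (u + 2 * u0)) X)) (aff3 b v0 (aff3 1 (b * (v + 2 * v0)) Y))"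
      by (simp only: aff3_translate[OF a, of u X u0] aff3_translate[OF b, of v Y v0])
    also have "\<dots> = B (aff3 1 (a * (u + 2 * u0)) X, aff3 1 (b * (v + 2 * v0)) Y)"
      using uv0 by simp
    finally show ?thesis .
  qed
  then show "\<exists>s t. \<forall>X<3. \<forall>Y<3. B (3 * I + X, 3 * J + Y) = B (aff3 1 s X, aff3 1 t Y)"
    by blast
qed

section \<open>Transporting boards along a normal form\<close>

text \<open>The hypothesis \<open>rel\<close> below says that \<open>B'\<close> arises from \<open>B\<close> by moving the entry of cell \<open>(r, c)\<close>
  to \<open>(\<rho> r, \<kappa> c)\<close> for two line maps \<open>\<rho>, \<kappa>\<close> and relabelling by \<open>\<pi>\<close>; by \<open>act_normal_form\<close>, this
  holds for \<open>B = B\<^sub>1\<close> and \<open>B' = g B\<^sub>1 \<circ> swap_if t\<close>.\<close>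

lemma sudoku_board_transport:
  assumes vP: "valid_lines P e" and vQ: "valid_lines Q f" and \<pi>: "\<pi> permutes {0..<9}"
    and B: "sudoku_board B" and ext: "B' \<in> extensional grid"
    and rel: "\<And>r c. r < 9 \<Longrightarrow> c < 9 \<Longrightarrow> B' (line_map P e k r, line_map Q f l c) = \<pi> (B (r, c))"
  shows "sudoku_board B'"
proof (rule sudoku_boardI[OF ext])
  have \<pi>_bij: "bij_betw \<pi> {0..<9} {0..<9}"
    using \<pi> by (rule permutes_imp_bij)
  have \<rho>: "bij_betw (line_map P e k) {0..<9} {0..<9}"
    using vP by (rule line_map_bij)
  have \<kappa>: "bij_betw (line_map Q f l) {0..<9} {0..<9}"
    using vQ by (rule line_map_bij)
  show "bij_betw (\<lambda>C. B' (R, C)) {0..<9} {0..<9}" if "R < 9" for R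
  proof -
    obtain r where r: "r < 9" "R = line_map P e k r"
      using \<rho> \<open>R < 9\<close> by (auto elim: bij_betw_obtain)
    show ?thesis
      by (rule bij_betw_transport[OF \<kappa> sudoku_board_row[OF B \<open>r < 9\<close>] \<pi>_bij]) (simp add: r rel)
  qed
  show "bij_betw (\<lambda>R. B' (R, C)) {0..<9} {0..<9}" if "C < 9" for C
  proof -
    obtain c where c: "c < 9" "C = line_map Q f l c"
      using \<kappa> \<open>C < 9\<close> by (auto elim: bij_betw_obtain)
    show ?thesis
      by (rule bij_betw_transport[OF \<rho> sudoku_board_col[OF B \<open>c < 9\<close>] \<pi>_bij]) (simp add: c rel)
  qed
  show "bij_betw (\<lambda>(x, y). B' (3 * I + x, 3 * J + y)) ({0..<3} \<times> {0..<3}) {0..<9}"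
    if "I < 3" "J < 3" for I J
  proof -
    have P: "bij_betw P {0..<3} {0..<3}" and Q: "bij_betw Q {0..<3} {0..<3}"
      using vP vQ by (simp_all add: valid_lines_def permutes_imp_bij)
    obtain i where i: "i < 3" "I = P i"
      using P \<open>I < 3\<close> by (auto elim: bij_betw_obtain)
    obtain j where j: "j < 3" "J = Q j"
      using Q \<open>J < 3\<close> by (auto elim: bij_betw_obtain)
    have "bij_betw (map_prod (aff3 (e i) (k i)) (aff3 (f j) (l j)))
        ({0..<3} \<times> {0..<3}) ({0..<3} \<times> {0..<3})"
      using vP vQ i j unfolding valid_lines_def by (intro bij_betw_map_prod aff3_bij) simp_all
    moreover have "B' (3 * P i + aff3 (e i) (k i) x, 3 * Q j + aff3 (f j) (l j) y)
        = \<pi> (B (3 * i + x, 3 * j + y))" if "x < 3" "y < 3" for x y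
      using rel[of "3 * i + x" "3 * j + y"] i j that by simp
    ultimately show ?thesis
      using i j by (intro bij_betw_transport[OF _ sudoku_board_block[OF B \<open>i < 3\<close> \<open>j < 3\<close>] \<pi>_bij]) auto
  qed
qed

lemma transport_block_affine:
  assumes vP: "valid_lines P e" and vQ: "valid_lines Q f"
    and B: "keedwell B" and B': "keedwell B'"
    and rel: "\<And>r c. r < 9 \<Longrightarrow> c < 9 \<Longrightarrow> B' (line_map P e k r, line_map Q f l c) = \<pi> (B (r, c))"
    and ij: "i < 3" "j < 3"
  obtains W V where "\<And>p q. p < 3 \<Longrightarrow> q < 3 \<Longrightarrow> \<pi> (B (p, q)) = B' (aff3 (e i) W p, aff3 (f j) V q)"
proof -
  obtain a b where ab: "\<And>x y. x < 3 \<Longrightarrow> y < 3 \<Longrightarrow> B (3 * i + x, 3 * j + y) = B (aff3 1 a x, aff3 1 b y)"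
    by (rule keedwell_block_translate[OF B ij]) auto
  obtain a' b' where ab': "\<And>X Y. X < 3 \<Longrightarrow> Y < 3 \<Longrightarrow>
      B' (3 * P i + X, 3 * Q j + Y) = B' (aff3 1 a' X, aff3 1 b' Y)"
    by (rule keedwell_block_translate[OF B' valid_lines_less[OF vP \<open>i < 3\<close>] valid_lines_less[OF vQ \<open>j < 3\<close>]])
      auto
  show ?thesis
  proof (rule that)
    fix p q :: nat assume pq: "p < 3" "q < 3"
    define x where "x = aff3 1 (2 * a) p"
    define y where "y = aff3 1 (2 * b) q"
    have xy: "x < 3" "y < 3"
      by (simp_all add: x_def y_def)
    have "\<pi> (B (p, q)) = \<pi> (B (aff3 1 a x, aff3 1 b y))"
      using pq by (simp only: x_def y_def aff3_translate_back)
    also have "\<dots> = \<pi> (B (3 * i + x, 3 * j + y))"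
      by (simp add: ab xy)
    also have "\<dots> = B' (line_map P e k (3 * i + x), line_map Q f l (3 * j + y))"
      using ij xy by (intro rel[symmetric]) linarith+
    also have "\<dots> = B' (3 * P i + aff3 (e i) (k i) x, 3 * Q j + aff3 (f j) (l j) y)"
      by (simp add: xy)
    also have "\<dots> = B' (aff3 1 a' (aff3 (e i) (k i) x), aff3 1 b' (aff3 (f j) (l j) y))"
      by (simp add: ab')
    also have "\<dots> = B' (aff3 (e i) (e i * (2 * a) + k i + a') p, aff3 (f j) (f j * (2 * b) + l j + b') q)"
      by (simp add: x_def y_def aff3_comp)
    finally show "\<pi> (B (p, q)) = B' (aff3 (e i) (e i * (2 * a) + k i + a') p, aff3 (f j) (f j * (2 * b) + l j + b') q)" .
  qed
qed

lemma transport_slopes_constant: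
  assumes vP: "valid_lines P e" and vQ: "valid_lines Q f"
    and B: "keedwell B" and B': "keedwell B'"
    and rel: "\<And>r c. r < 9 \<Longrightarrow> c < 9 \<Longrightarrow> B' (line_map P e k r, line_map Q f l c) = \<pi> (B (r, c))"
    and ij: "i < 3" "j < 3"
  shows "e i = e 0 \<and> f j = f 0"
proof -
  obtain W V where WV: "\<And>p q. p < 3 \<Longrightarrow> q < 3 \<Longrightarrow> \<pi> (B (p, q)) = B' (aff3 (e i) W p, aff3 (f j) V q)"
    by (rule transport_block_affine[OF vP vQ B B' rel ij]) auto
  obtain W0 V0 where WV0: "\<And>p q. p < 3 \<Longrightarrow> q < 3 \<Longrightarrow> \<pi> (B (p, q)) = B' (aff3 (e 0) W0 p, aff3 (f 0) V0 q)"
    by (rule transport_block_affine[OF vP vQ B B' rel, of 0 0]) auto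
  have sB': "sudoku_board B'"
    using B' by (simp add: keedwell_iff_translates)
  have agree: "aff3 (e i) W p = aff3 (e 0) W0 p \<and> aff3 (f j) V q = aff3 (f 0) V0 q"
    if "p < 3" "q < 3" for p q
    using WV[OF that] WV0[OF that] by (intro sudoku_board_corner_inj[OF sB']) simp_all
  have "e i \<in> {1, 2}" "e 0 \<in> {1, 2}" "f j \<in> {1, 2}" "f 0 \<in> {1, 2}"
    using vP vQ ij by (simp_all add: valid_lines_def)
  then show ?thesis
    using agree[of 0 0] agree[of 1 1] by (auto intro: aff3_slope_eq)
qed

lemma keedwell_transport:
  assumes vP: "valid_lines P e" and vQ: "valid_lines Q f"
    and e: "\<And>i. i < 3 \<Longrightarrow> e i = e 0" and f: "\<And>j. j < 3 \<Longrightarrow> f j = f 0"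
    and B: "keedwell B" and B': "sudoku_board B'"
    and rel: "\<And>r c. r < 9 \<Longrightarrow> c < 9 \<Longrightarrow> B' (line_map P e k r, line_map Q f l c) = \<pi> (B (r, c))"
  shows "keedwell B'"
proof (rule keedwell_of_affine_blocks[OF B', where L = "\<lambda>p q. \<pi> (B (p, q))"])
  show "e 0 \<in> {1, 2}" "f 0 \<in> {1, 2}"
    using vP vQ by (simp_all add: valid_lines_def)
  fix I J :: nat assume "I < 3" "J < 3"
  obtain i where i: "i < 3" "I = P i"
    using vP \<open>I < 3\<close> unfolding valid_lines_def by (auto elim: bij_betw_obtain[OF permutes_imp_bij])
  obtain j where j: "j < 3" "J = Q j"
    using vQ \<open>J < 3\<close> unfolding valid_lines_def by (auto elim: bij_betw_obtain[OF permutes_imp_bij])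
  have ei: "e i \<in> {1, 2}" and fj: "f j \<in> {1, 2}"
    using vP vQ i j by (simp_all add: valid_lines_def)
  obtain a b where ab: "\<And>x y. x < 3 \<Longrightarrow> y < 3 \<Longrightarrow> B (3 * i + x, 3 * j + y) = B (aff3 1 a x, aff3 1 b y)"
    by (rule keedwell_block_translate[OF B i(1) j(1)]) auto
  have "B' (3 * I + X, 3 * J + Y) =
      \<pi> (B (aff3 (e 0) (2 * e i * k i + a) X, aff3 (f 0) (2 * f j * l j + b) Y))"
    if "X < 3" "Y < 3" for X Y
  proof -
    define x where "x = aff3 (e i) (2 * e i * k i) X"
    define y where "y = aff3 (f j) (2 * f j * l j) Y"
    have xy: "x < 3" "y < 3"
      by (simp_all add: x_def y_def)
    have "B' (3 * I + X, 3 * J + Y) = B' (line_map P e k (3 * i + x), line_map Q f l (3 * j + y))"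
      using i j xy that by (simp add: x_def y_def aff3_inverse[OF ei] aff3_inverse[OF fj])
    also have "\<dots> = \<pi> (B (3 * i + x, 3 * j + y))"
      using i j xy by (intro rel) linarith+
    also have "\<dots> = \<pi> (B (aff3 1 a x, aff3 1 b y))"
      by (simp add: ab xy)
    also have "\<dots> = \<pi> (B (aff3 (e 0) (2 * e i * k i + a) X, aff3 (f 0) (2 * f j * l j + b) Y))"
      using e[OF i(1)] f[OF j(1)] by (simp add: x_def y_def aff3_comp)
    finally show ?thesis .
  qed
  then show "\<exists>u v. \<forall>X<3. \<forall>Y<3. B' (3 * I + X, 3 * J + Y) = \<pi> (B (aff3 (e 0) u X, aff3 (f 0) v Y))"
    by blast
qed

lemma act_swap_if_extensional: "act g B \<circ> swap_if t \<in> extensional grid"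
  by (auto simp: extensional_def act_def)

lemma normal_form_slopes_constant:
  assumes \<sigma>: "normal_form \<sigma> t P e k Q f l" and B: "keedwell B" and gB: "keedwell (act (\<sigma>, \<pi>) B)"
    and ij: "i < 3" "j < 3"
  shows "e i = e 0 \<and> f j = f 0"
proof -
  define B' where "B' = act (\<sigma>, \<pi>) B \<circ> swap_if t"
  have vP: "valid_lines P e" and vQ: "valid_lines Q f"
    using \<sigma> by (simp_all add: normal_form_def)
  have "keedwell B'"
    using gB by (simp add: B'_def keedwell_swap_if_iff)
  moreover have "B' (line_map P e k r, line_map Q f l c) = \<pi> (B (r, c))" if "r < 9" "c < 9" for r c
    using act_normal_form[OF \<sigma> that] by (simp add: B'_def)
  ultimately show ?thesis
    by (rule transport_slopes_constant[where \<pi> = \<pi> and k = k and l = l, OF vP vQ B _ _ ij])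
qed

lemma act_keedwell:
  assumes \<sigma>: "normal_form \<sigma> t P e k Q f l" and \<pi>: "\<pi> permutes {0..<9}"
    and e: "\<And>i. i < 3 \<Longrightarrow> e i = e 0" and f: "\<And>j. j < 3 \<Longrightarrow> f j = f 0"
    and B: "keedwell B"
  shows "keedwell (act (\<sigma>, \<pi>) B)"
proof -
  define B' where "B' = act (\<sigma>, \<pi>) B \<circ> swap_if t"
  have vP: "valid_lines P e" and vQ: "valid_lines Q f"
    using \<sigma> by (simp_all add: normal_form_def)
  have rel: "B' (line_map P e k r, line_map Q f l c) = \<pi> (B (r, c))" if "r < 9" "c < 9" for r c
    using act_normal_form[OF \<sigma> that] by (simp add: B'_def)
  have sB': "sudoku_board B'"
    using keedwell_sudoku_board[OF B] act_swap_if_extensional[of "(\<sigma>, \<pi>)" B t] rel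
    unfolding B'_def[symmetric] by (rule sudoku_board_transport[OF vP vQ \<pi>])
  have "keedwell B'"
    by (rule keedwell_transport[where \<pi> = \<pi> and k = k and l = l, OF vP vQ _ _ B sB'])
      (fact e f rel)+
  then show ?thesis
    by (simp add: B'_def keedwell_swap_if_iff)
qed


theorem lemma3p5:
  assumes "keedwell B1" and "g \<in> G9" and "keedwell (act g B1)"
  shows "g \<in> Gk"
proof -
  obtain \<sigma> \<pi> where g: "g = (\<sigma>, \<pi>)" and \<sigma>: "\<sigma> \<in> H9" and \<pi>: "\<pi> permutes {0..<9}"
    using assms(2) unfolding G9_def by auto
  obtain t P e k Q f l where nf: "normal_form \<sigma> t P e k Q f l"
    using H9_normal_form[OF \<sigma>] by blast
  have e: "e i = e 0" if "i < 3" for i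
    using normal_form_slopes_constant[where j = 0, OF nf assms(1) _ that] assms(3) g by simp
  have f: "f j = f 0" if "j < 3" for j
    using normal_form_slopes_constant[where i = 0, OF nf assms(1) _ _ that] assms(3) g by simp
  have "act g ` {B. keedwell B} \<subseteq> {B. keedwell B}"
    using act_keedwell[OF nf \<pi> e f] g by auto
  moreover have "inj_on (act g) {B. keedwell B}"
    unfolding g using act_inj_on[OF normal_form_bij[OF nf] permutes_inj[OF \<pi>]]
    by (rule inj_on_subset) (auto intro: sudoku_board_extensional keedwell_sudoku_board)
  moreover have "finite {B. keedwell B}"
    using finite_sudoku_boards by (rule finite_subset[rotated]) (auto intro: keedwell_sudoku_board)
  ultimately have "act g ` {B. keedwell B} = {B. keedwell B}"
    by (intro endo_inj_surj)
  then show ?thesis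
    using assms(2) by (simp add: Gk_def)
qed

end
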